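(* If $p$ is a two-phase solution of the focusing NLS equation, then $\nu_1$ and $\nu_2$ are bounded: there is $M>0$ with $\nu_1(x,t)^2+\nu_2(x,t)^2<M$ for all $(x,t)\in\mathbb R^2$.
   Context: Let $p(x,t)$, $(x,t)\in\mathbb R^2$, be a smooth complex-valued solution of the focusing nonlinear Schrödinger equation $ip_t+p_{xx}+2|p|^2p=0$; $^*$ denotes complex conjugation and subscripts denote partial derivatives. Put $\mathbb U=\begin{pmatrix}-i\lambda& ip\\ ip^*& i\lambda\end{pmatrix}$ and $\mathbb V=\begin{pmatrix}-2i\lambda^2+i|p|^2& 2i\lambda p-p_x\\ 2i\lambda p^*+p^*_x& 2i\lambda^2-i|p|^2\end{pmatrix}$. The solution $p$ is called a two-phase solution if there exist real constants $c_0,c_1,c_2$ such that the matrix $\Psi=\begin{pmatrix}\Psi_{11}&\Psi_{12}\\ \Psi_{21}&-\Psi_{11}\end{pmatrix}$ with $\Psi_{11}=-i\lambda^3-ic_2\lambda^2+(\tfrac12 i|p|^2-ic_1)\lambda+\tfrac14(pp^*_x-p_xp^* )+\tfrac12 ic_2|p|^2-ic_0$, $\Psi_{12}=ip\lambda^2+(-\tfrac12p_x+ic_2p)\lambda-\tfrac14 ip_{xx}-\tfrac12 ip|p|^2-\tfrac12c_2p_x+ic_1p$, $\Psi_{21}=ip^*\lambda^2+(\tfrac12p^*_x+ic_2p^* )\lambda-\tfrac14 ip^*_{xx}-\tfrac12 ip^*|p|^2+\tfrac12c_2p^*_x+ic_1p^*$ satisfies $\Psi_x=[\mathbb U,\Psi]$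 and $\Psi_t=[\mathbb V,\Psi]$ identically in $\lambda\in\mathbb C$. Set $\nu_1=|p|^2$ and $\nu_2=i(p^*p_x-pp^*_x)$ (both real). *)

theory Defs
  imports "HOL-Analysis.Analysis"
begin

definition Dx :: "(real \<Rightarrow> real \<Rightarrow> 'a::real_normed_vector) \<Rightarrow> real \<Rightarrow> real \<Rightarrow> 'a" where
  "Dx f x t = vector_derivative (\<lambda>y. f y t) (at x)"

definition Dt :: "(real \<Rightarrow> real \<Rightarrow> 'a::real_normed_vector) \<Rightarrow> real \<Rightarrow> real \<Rightarrow> 'a" where
  "Dt f x t = vector_derivative (\<lambda>s. f x s) (at t)"

text \<open>Smoothness (C-infinity on R^2): f is (Frechet) differentiable everywhere with
  differential given by its partial derivatives, and the partial derivatives are again smooth.\<close>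
coinductive smooth2 :: "(real \<Rightarrow> real \<Rightarrow> complex) \<Rightarrow> bool" where
  "(\<And>x t. ((\<lambda>z. f (fst z) (snd z)) has_derivative
              (\<lambda>h. fst h *\<^sub>R Dx f x t + snd h *\<^sub>R Dt f x t)) (at (x, t)))
   \<Longrightarrow> smooth2 (Dx f) \<Longrightarrow> smooth2 (Dt f) \<Longrightarrow> smooth2 f"

definition mat2 :: "complex \<Rightarrow> complex \<Rightarrow> complex \<Rightarrow> complex \<Rightarrow> complex^2^2" where
  "mat2 a b c d = (\<chi> i j. if i = 1 then (if j = 1 then a else b) else (if j = 1 then c else d))"

definition commutator :: "complex^2^2 \<Rightarrow> complex^2^2 \<Rightarrow> complex^2^2" where
  "commutator A B = A ** B - B ** A"

definition focusing_NLS :: "(real \<Rightarrow> real \<Rightarrow> complex) \<Rightarrow> bool" where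
  "focusing_NLS p \<longleftrightarrow> (\<forall>x t. \<i> * Dt p x t + Dx (Dx p) x t + 2 * (of_real ((cmod (p x t))\<^sup>2)) * p x t = 0)"

definition UU :: "(real \<Rightarrow> real \<Rightarrow> complex) \<Rightarrow> real \<Rightarrow> real \<Rightarrow> complex \<Rightarrow> complex^2^2" where
  "UU p x t lam = mat2 (- \<i> * lam) (\<i> * p x t) (\<i> * cnj (p x t)) (\<i> * lam)"

definition VV :: "(real \<Rightarrow> real \<Rightarrow> complex) \<Rightarrow> real \<Rightarrow> real \<Rightarrow> complex \<Rightarrow> complex^2^2" where
  "VV p x t lam = (let q = p x t; qx = Dx p x t; a = of_real ((cmod q)\<^sup>2) in
     mat2 (- 2 * \<i> * lam\<^sup>2 + \<i> * a) (2 * \<i> * lam * q - qx)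
          (2 * \<i> * lam * cnj q + cnj qx) (2 * \<i> * lam\<^sup>2 - \<i> * a))"

definition Psi :: "real \<Rightarrow> real \<Rightarrow> real \<Rightarrow> (real \<Rightarrow> real \<Rightarrow> complex) \<Rightarrow> real \<Rightarrow> real \<Rightarrow> complex \<Rightarrow> complex^2^2" where
  "Psi c0 c1 c2 p x t lam = (let q = p x t; qx = Dx p x t; qxx = Dx (Dx p) x t;
       a = of_real ((cmod q)\<^sup>2);
       P11 = - \<i> * lam^3 - \<i> * c2 * lam\<^sup>2 + (\<i>/2 * a - \<i> * c1) * lam
             + (q * cnj qx - qx * cnj q) / 4 + \<i>/2 * c2 * a - \<i> * c0;
       P12 = \<i> * q * lam\<^sup>2 + (- qx / 2 + \<i> * c2 * q) * lam - \<i>/4 * qxx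
             - \<i>/2 * q * a - c2/2 * qx + \<i> * c1 * q;
       P21 = \<i> * cnj q * lam\<^sup>2 + (cnj qx / 2 + \<i> * c2 * cnj q) * lam - \<i>/4 * cnj qxx
             - \<i>/2 * cnj q * a + c2/2 * cnj qx + \<i> * c1 * cnj q
     in mat2 P11 P12 P21 (- P11))"

definition two_phase :: "(real \<Rightarrow> real \<Rightarrow> complex) \<Rightarrow> bool" where
  "two_phase p \<longleftrightarrow> (\<exists>c0 c1 c2 :: real. \<forall>lam::complex. \<forall>x t.
      Dx (\<lambda>y s. Psi c0 c1 c2 p y s lam) x t = commutator (UU p x t lam) (Psi c0 c1 c2 p x t lam) \<and>
      Dt (\<lambda>y s. Psi c0 c1 c2 p y s lam) x t = commutator (VV p x t lam) (Psi c0 c1 c2 p x t lam))"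

definition nu1 :: "(real \<Rightarrow> real \<Rightarrow> complex) \<Rightarrow> real \<Rightarrow> real \<Rightarrow> real" where
  "nu1 p x t = (cmod (p x t))\<^sup>2"

definition nu2 :: "(real \<Rightarrow> real \<Rightarrow> complex) \<Rightarrow> real \<Rightarrow> real \<Rightarrow> real" where
  "nu2 p x t = Re (\<i> * (cnj (p x t) * Dx p x t - p x t * cnj (Dx p x t)))"

end

theory Submission
  imports Defs
begin

text \<open>\<open>Psi\<close> evolves by commutators in both \<open>x\<close> and \<open>t\<close>, so \<open>det Psi(\<lambda>)\<close> does not depend
  on \<open>(x, t)\<close>. For real \<open>\<lambda>\<close> the matrix \<open>Psi\<close> lies in \<open>su(2)\<close>, so
  \<open>det Psi = \<alpha>\<^sup>2 + |Psi\<^sub>1\<^sub>2|\<^sup>2\<close> with \<open>\<alpha> = Im Psi\<^sub>1\<^sub>1\<close> a cubic in \<open>\<lambda>\<close> whose coefficients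
  are affine in \<open>\<nu>\<^sub>1, \<nu>\<^sub>2\<close>. Hence \<open>\<alpha>(\<lambda>)\<close> is bounded uniformly in \<open>(x, t)\<close> for each real \<open>\<lambda>\<close>,
  and comparing \<open>\<lambda> = 0\<close> with \<open>\<lambda> = 1\<close> bounds \<open>\<nu>\<^sub>1\<close> and then \<open>\<nu>\<^sub>2\<close>.\<close>

lemma commutator_nth_2:
  fixes A B :: "complex^2^2"
  shows "commutator A B $ 1 $ 1 = A$1$2 * B$2$1 - B$1$2 * A$2$1"
    "commutator A B $ 1 $ 2 = A$1$1 * B$1$2 + A$1$2 * B$2$2 - B$1$1 * A$1$2 - B$1$2 * A$2$2"
    "commutator A B $ 2 $ 1 = A$2$1 * B$1$1 + A$2$2 * B$2$1 - B$2$1 * A$1$1 - B$2$2 * A$2$1"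
    "commutator A B $ 2 $ 2 = A$2$1 * B$1$2 - B$2$1 * A$1$2"
  by (simp_all add: commutator_def matrix_matrix_mult_def sum_2 algebra_simps)

lemma det_constant_under_commutator_flow:
  fixes F U :: "real \<Rightarrow> complex^2^2"
  assumes flow: "\<And>s. (F has_vector_derivative commutator (U s) (F s)) (at s)"
  shows "det (F s) = det (F s')"
proof -
  have entry: "((\<lambda>s. F s $ i $ j) has_vector_derivative commutator (U s) (F s) $ i $ j) (at s)"
    for s i j
    using bounded_linear.has_vector_derivative[OF bounded_linear_vec_nth
            bounded_linear.has_vector_derivative[OF bounded_linear_vec_nth flow]] .
  have "((\<lambda>s. det (F s)) has_vector_derivative 0) (at s)" for s
  proof -
    have "((\<lambda>s. F s$1$1 * F s$2$2 - F s$1$2 * F s$2$1) has_vector_derivative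
           (let C = commutator (U s) (F s) in
             C$1$1 * F s$2$2 + F s$1$1 * C$2$2 - (C$1$2 * F s$2$1 + F s$1$2 * C$2$1))) (at s)"
      using entry unfolding Let_def has_vector_derivative_def
      by (auto intro!: derivative_eq_intros simp: algebra_simps)
    moreover have "(let C = commutator (U s) (F s) in
             C$1$1 * F s$2$2 + F s$1$1 * C$2$2 - (C$1$2 * F s$2$1 + F s$1$2 * C$2$1)) = 0"
      by (simp add: commutator_nth_2 algebra_simps)
    ultimately show ?thesis by (simp add: det_2)
  qed
  then obtain c where "\<And>s. det (F s) = c"
    using has_vector_derivative_zero_constant[of UNIV "\<lambda>s. det (F s)"] by auto
  then show ?thesis by simp
qed

lemma bounded_linear_mat2:
  "bounded_linear (\<lambda>(a, b, c, d). mat2 a b c d :: complex^2^2)"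
  by (intro linear_conv_bounded_linear[THEN iffD1] linearI)
     (auto simp: mat2_def vec_eq_iff forall_2)

lemma differentiable_mat2:
  fixes a b c d :: "'a::real_normed_vector \<Rightarrow> complex"
  assumes "a differentiable at x within S" "b differentiable at x within S"
    "c differentiable at x within S" "d differentiable at x within S"
  shows "(\<lambda>z. mat2 (a z) (b z) (c z) (d z)) differentiable at x within S"
proof -
  have "(\<lambda>z. (a z, b z, c z, d z)) differentiable at x within S"
    using assms by simp
  from differentiable_compose[OF bounded_linear_imp_differentiable[OF bounded_linear_mat2] this]
  show ?thesis by (simp add: o_def)
qed

lemma smooth2_differentiable:
  "smooth2 f \<Longrightarrow> (\<lambda>z. f (fst z) (snd z)) differentiable (at z)"
  by (cases z) (auto elim: smooth2.cases simp: differentiable_def)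

lemma smooth2_Dx: "smooth2 f \<Longrightarrow> smooth2 (Dx f)"
  by (auto elim: smooth2.cases)

lemma differentiable_along_x:
  fixes f :: "real \<Rightarrow> real \<Rightarrow> 'a::real_normed_vector"
  assumes "(\<lambda>z. f (fst z) (snd z)) differentiable (at (x, t))"
  shows "(\<lambda>y. f y t) differentiable (at x)"
  using differentiable_chain_at[of "\<lambda>y. (y, t)" x, OF _ assms]
  by (simp add: o_def)

lemma differentiable_along_t:
  fixes f :: "real \<Rightarrow> real \<Rightarrow> 'a::real_normed_vector"
  assumes "(\<lambda>z. f (fst z) (snd z)) differentiable (at (x, t))"
  shows "(\<lambda>s. f x s) differentiable (at t)"
  using differentiable_chain_at[of "\<lambda>s. (x, s)" t, OF _ assms]
  by (simp add: o_def)

lemma Psi_differentiable: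
  assumes "smooth2 p"
  shows "(\<lambda>z. Psi c0 c1 c2 p (fst z) (snd z) lam) differentiable (at z)"
proof -
  have "smooth2 (Dx p)" "smooth2 (Dx (Dx p))"
    using assms by (auto intro: smooth2_Dx)
  then have "(\<lambda>z. f (fst z) (snd z)) differentiable (at z)"
    "(\<lambda>z. cnj (f (fst z) (snd z))) differentiable (at z)"
    if "f \<in> {p, Dx p, Dx (Dx p)}" for f
    using that assms by (auto intro: smooth2_differentiable simp: differentiable_cnj_iff)
  then show ?thesis
    unfolding Psi_def Let_def complex_norm_square
    by (intro differentiable_mat2) (auto intro!: derivative_intros)
qed

lemma det_constant_of_Lax_pair:
  fixes G U V :: "real \<Rightarrow> real \<Rightarrow> complex^2^2"
  assumes G_diff: "\<And>z. (\<lambda>z. G (fst z) (snd z)) differentiable (at z)"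
    and Lax_x: "\<And>x t. Dx G x t = commutator (U x t) (G x t)"
    and Lax_t: "\<And>x t. Dt G x t = commutator (V x t) (G x t)"
  shows "det (G x t) = det (G x' t')"
proof -
  have "det (G x t) = det (G x' t)" for x x' t
  proof (rule det_constant_under_commutator_flow)
    show "((\<lambda>y. G y t) has_vector_derivative commutator (U y t) (G y t)) (at y)" for y
      using differentiable_along_x[OF G_diff] Lax_x[of y t]
      by (metis Dx_def vector_derivative_works)
  qed
  moreover have "det (G x t) = det (G x t')" for x t t'
  proof (rule det_constant_under_commutator_flow)
    show "((\<lambda>s. G x s) has_vector_derivative commutator (V x s) (G x s)) (at s)" for s
      using differentiable_along_t[OF G_diff] Lax_t[of x s]
      by (metis Dt_def vector_derivative_works)
  qed
  ultimately show ?thesis by metis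
qed

definition su2 :: "real \<Rightarrow> complex \<Rightarrow> complex^2^2" where
  "su2 a b = mat2 (\<i> * of_real a) b (- cnj b) (- \<i> * of_real a)"

lemma det_su2: "det (su2 a b) = of_real (a\<^sup>2 + (cmod b)\<^sup>2)"
  by (simp add: su2_def mat2_def det_2 complex_eq_iff power2_eq_square
      cmod_power2[unfolded power2_eq_square])

definition Psi_cubic :: "real \<Rightarrow> real \<Rightarrow> real \<Rightarrow> real \<Rightarrow> real \<Rightarrow> real \<Rightarrow> real" where
  "Psi_cubic c0 c1 c2 n1 n2 r = - (r ^ 3) - c2 * r\<^sup>2 + (n1 / 2 - c1) * r + n2 / 4 + c2 * n1 / 2 - c0"

lemma Psi_of_real:
  "Psi c0 c1 c2 p x t (of_real r) =
     su2 (Psi_cubic c0 c1 c2 (nu1 p x t) (nu2 p x t) r) (Psi c0 c1 c2 p x t (of_real r) $ 1 $ 2)"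
  by (simp add: Psi_def Let_def su2_def mat2_def Psi_cubic_def nu1_def nu2_def vec_eq_iff forall_2
      complex_eq_iff cmod_power2 power2_eq_square power3_eq_cube field_simps)

lemma sum_squares_bounded_of_abs_bounded:
  fixes f g :: "'a \<Rightarrow> real"
  assumes "\<And>x. \<bar>f x\<bar> \<le> A" "\<And>x. \<bar>g x\<bar> \<le> B"
  shows "\<exists>M>0. \<forall>x. (f x)\<^sup>2 + (g x)\<^sup>2 < M"
proof (intro exI conjI allI)
  show "0 < A\<^sup>2 + B\<^sup>2 + 1" by (simp add: add_nonneg_pos)
  fix x
  have "(f x)\<^sup>2 \<le> A\<^sup>2" "(g x)\<^sup>2 \<le> B\<^sup>2"
    using assms[of x] by (metis abs_ge_zero power2_abs power_mono)+
  then show "(f x)\<^sup>2 + (g x)\<^sup>2 < A\<^sup>2 + B\<^sup>2 + 1" by linarith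
qed

lemma bounded_of_bounded_Psi_cubic:
  fixes n1 n2 :: "'a \<Rightarrow> real"
  assumes "\<And>r x. (Psi_cubic c0 c1 c2 (n1 x) (n2 x) r)\<^sup>2 \<le> D r"
  shows "\<exists>M>0. \<forall>x. (n1 x)\<^sup>2 + (n2 x)\<^sup>2 < M"
proof -
  define a where "a r x = Psi_cubic c0 c1 c2 (n1 x) (n2 x) r" for r x
  have a_bound: "\<bar>a r x\<bar> \<le> sqrt (D r)" for r x
    using assms[where r=r and x=x] unfolding a_def by (metis real_sqrt_abs real_sqrt_le_mono)
  define B1 where "B1 = 2 * (sqrt (D 1) + sqrt (D 0) + \<bar>1 + c2 + c1\<bar>)"
  have n1: "n1 x = 2 * (a 1 x - a 0 x + (1 + c2 + c1))"
    and n2: "n2 x = 4 * (a 0 x + c0) - 2 * (c2 * n1 x)" for x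
    by (simp_all add: a_def Psi_cubic_def algebra_simps)
  have n1_bound: "\<bar>n1 x\<bar> \<le> B1" for x
    unfolding n1 B1_def using a_bound[of 1 x] a_bound[of 0 x] abs_ge_self[of "1 + c2 + c1"]
      abs_ge_minus_self[of "1 + c2 + c1"]
    by (auto simp: abs_le_iff)
  have "\<bar>n2 x\<bar> \<le> 4 * (sqrt (D 0) + \<bar>c0\<bar>) + 2 * \<bar>c2\<bar> * B1" for x
  proof -
    have "\<bar>c2 * n1 x\<bar> \<le> \<bar>c2\<bar> * B1"
      unfolding abs_mult using n1_bound by (simp add: mult_left_mono)
    then show ?thesis unfolding n2 using a_bound[of 0 x] abs_ge_self[of c0] abs_ge_minus_self[of c0]
      by (auto simp: abs_le_iff)
  qed
  with n1_bound show ?thesis by (rule sum_squares_bounded_of_abs_bounded)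
qed

theorem mainTheorem15:
  fixes p :: "real \<Rightarrow> real \<Rightarrow> complex"
  assumes "smooth2 p" and "focusing_NLS p" and "two_phase p"
  shows "\<exists>M>0. \<forall>x t. (nu1 p x t)\<^sup>2 + (nu2 p x t)\<^sup>2 < M"
proof -
  obtain c0 c1 c2 :: real where Lax: "\<And>lam x t.
      Dx (\<lambda>y s. Psi c0 c1 c2 p y s lam) x t = commutator (UU p x t lam) (Psi c0 c1 c2 p x t lam) \<and>
      Dt (\<lambda>y s. Psi c0 c1 c2 p y s lam) x t = commutator (VV p x t lam) (Psi c0 c1 c2 p x t lam)"
    using \<open>two_phase p\<close> unfolding two_phase_def by blast
  have det_Psi: "det (Psi c0 c1 c2 p x t lam) = det (Psi c0 c1 c2 p 0 0 lam)" for x t lam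
    by (rule det_constant_of_Lax_pair[where U = "\<lambda>x t. UU p x t lam" and V = "\<lambda>x t. VV p x t lam"])
       (use Lax Psi_differentiable[OF \<open>smooth2 p\<close>] in auto)
  have "(Psi_cubic c0 c1 c2 (nu1 p x t) (nu2 p x t) r)\<^sup>2 \<le> Re (det (Psi c0 c1 c2 p 0 0 (of_real r)))"
    for r x t
  proof -
    have "Re (det (Psi c0 c1 c2 p 0 0 (of_real r))) =
        (Psi_cubic c0 c1 c2 (nu1 p x t) (nu2 p x t) r)\<^sup>2 + (cmod (Psi c0 c1 c2 p x t (of_real r) $ 1 $ 2))\<^sup>2"
      using det_Psi[of x t "of_real r"] by (metis Psi_of_real det_su2 Re_complex_of_real)
    then show ?thesis by simp
  qed
  then have "\<exists>M>0. \<forall>z. (nu1 p (fst z) (snd z))\<^sup>2 + (nu2 p (fst z) (snd z))\<^sup>2 < M"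
    by (intro bounded_of_bounded_Psi_cubic)
  then show ?thesis by auto
qed

end
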